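(* The Heisenberg Lie algebra $H(m)$ is $2$-capable if and only if $m=1$.
   Context: All Lie algebras are over a fixed field. The Heisenberg Lie algebra $H(m)$ is the Lie algebra of dimension $2m+1$ with $H(m)^2=Z(H(m))$ and $\dim H(m)^2=1$. A Lie algebra $L$ is $2$-capable if $L\cong H/Z_2(H)$ for some Lie algebra $H$, where $Z_2(H)$ is the second term of the upper central series of $H$. *)

theory Defs
  imports Complex_Main "HOL-Library.Function_Algebras"
begin

definition lie_algebra ::
  "('k::field \<Rightarrow> 'v::ab_group_add \<Rightarrow> 'v) \<Rightarrow> 'v set \<Rightarrow> ('v \<Rightarrow> 'v \<Rightarrow> 'v) \<Rightarrow> bool" where
  "lie_algebra scale V br \<longleftrightarrow>
     vector_space scale \<and> module.subspace scale V \<and>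
     (\<forall>x\<in>V. \<forall>y\<in>V. br x y \<in> V) \<and>
     (\<forall>x\<in>V. \<forall>y\<in>V. \<forall>z\<in>V. br (x + y) z = br x z + br y z) \<and>
     (\<forall>x\<in>V. \<forall>y\<in>V. \<forall>z\<in>V. br x (y + z) = br x y + br x z) \<and>
     (\<forall>c. \<forall>x\<in>V. \<forall>y\<in>V. br (scale c x) y = scale c (br x y)) \<and>
     (\<forall>c. \<forall>x\<in>V. \<forall>y\<in>V. br x (scale c y) = scale c (br x y)) \<and>
     (\<forall>x\<in>V. br x x = 0) \<and>
     (\<forall>x\<in>V. \<forall>y\<in>V. \<forall>z\<in>V. br x (br y z) + br y (br z x) + br z (br x y) = 0)"

definition lie_center :: "'v set \<Rightarrow> ('v \<Rightarrow> 'v \<Rightarrow> 'v::zero) \<Rightarrow> 'v set" where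
  "lie_center V br = {z \<in> V. \<forall>x\<in>V. br z x = 0}"

definition lie_center2 :: "'v set \<Rightarrow> ('v \<Rightarrow> 'v \<Rightarrow> 'v::zero) \<Rightarrow> 'v set" where
  "lie_center2 V br = {z \<in> V. \<forall>x\<in>V. br z x \<in> lie_center V br}"

definition lie_derived ::
  "('k::field \<Rightarrow> 'v::ab_group_add \<Rightarrow> 'v) \<Rightarrow> 'v set \<Rightarrow> ('v \<Rightarrow> 'v \<Rightarrow> 'v) \<Rightarrow> 'v set" where
  "lie_derived scale V br = module.span scale {br x y | x y. x \<in> V \<and> y \<in> V}"

definition is_heisenberg ::
  "('k::field \<Rightarrow> 'v::ab_group_add \<Rightarrow> 'v) \<Rightarrow> 'v set \<Rightarrow> ('v \<Rightarrow> 'v \<Rightarrow> 'v) \<Rightarrow> nat \<Rightarrow> bool" where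
  "is_heisenberg scale V br m \<longleftrightarrow>
     lie_algebra scale V br \<and>
     vector_space.dim scale V = 2 * m + 1 \<and>
     lie_derived scale V br = lie_center V br \<and>
     vector_space.dim scale (lie_derived scale V br) = 1"

definition lie_hom ::
  "('k::field \<Rightarrow> 'v::ab_group_add \<Rightarrow> 'v) \<Rightarrow> 'v set \<Rightarrow> ('v \<Rightarrow> 'v \<Rightarrow> 'v) \<Rightarrow>
   ('k \<Rightarrow> 'w::ab_group_add \<Rightarrow> 'w) \<Rightarrow> 'w set \<Rightarrow> ('w \<Rightarrow> 'w \<Rightarrow> 'w) \<Rightarrow> ('v \<Rightarrow> 'w) \<Rightarrow> bool" where
  "lie_hom s1 V1 br1 s2 V2 br2 f \<longleftrightarrow>
     (\<forall>x\<in>V1. f x \<in> V2) \<and>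
     (\<forall>x\<in>V1. \<forall>y\<in>V1. f (x + y) = f x + f y) \<and>
     (\<forall>c. \<forall>x\<in>V1. f (s1 c x) = s2 c (f x)) \<and>
     (\<forall>x\<in>V1. \<forall>y\<in>V1. f (br1 x y) = br2 (f x) (f y))"

definition fscale :: "'k::field \<Rightarrow> ('i \<Rightarrow> 'k) \<Rightarrow> ('i \<Rightarrow> 'k)" where
  "fscale c g = (\<lambda>i. c * g i)"

text \<open>L is 2-capable iff L is isomorphic to H/Z_2(H) for some Lie algebra H
  over the same field.  By the first isomorphism theorem this means: there is a surjective
  Lie homomorphism f : H -> L with kernel exactly Z_2(H).  Every vector space over 'k embeds
  as a subspace of a function space ('i => 'k) for a large enough index type; the candidate
  algebras H are taken to be subspaces of ('h + nat => 'k) with the pointwise operations,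
  where 'h is an arbitrary type (given by the TYPE argument).  Since 'h is free in the main
  theorem, H ranges over Lie algebras of every dimension.\<close>

definition two_capable ::
  "'h itself \<Rightarrow> ('k::field \<Rightarrow> 'v::ab_group_add \<Rightarrow> 'v) \<Rightarrow> 'v set \<Rightarrow> ('v \<Rightarrow> 'v \<Rightarrow> 'v) \<Rightarrow> bool" where
  "two_capable (_::'h itself) scale V br \<longleftrightarrow>
     (\<exists>(H :: ('h + nat \<Rightarrow> 'k) set) brH f.
        lie_algebra fscale H brH \<and>
        lie_hom fscale H brH scale V br f \<and>
        f ` H = V \<and>
        {x \<in> H. f x = 0} = lie_center2 H brH)"

end

theory Submission
  imports Defs
begin

text \<open>Let \<open>z = [u,v]\<close> span the centre of \<open>H(m)\<close>. Suppose \<open>f : H \<rightarrow> H(m)\<close> is onto with kernel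
  \<open>Z\<^sub>2(H)\<close> and let \<open>c = [u',v']\<close> for preimages \<open>u'\<close>, \<open>v'\<close>. Modulo \<open>Z\<^sub>2(H)\<close> the double bracket
  \<open>[[y,x],k]\<close> only depends on \<open>f y\<close>, so the Jacobi identity for \<open>a, b, u\<close> and \<open>a, b, v\<close> shows
  that \<open>c \<in> Z\<^sub>2(H)\<close> as soon as two elements \<open>a, b\<close> of the centraliser of \<open>u, v\<close> satisfy
  \<open>[a,b] \<noteq> 0\<close>. As \<open>f c = z \<noteq> 0\<close>, that centraliser is abelian, which forces
  \<open>H(m) = span {u, v, z}\<close>, i.e. \<open>m = 1\<close>. Conversely \<open>H(1)\<close> is the quotient of the
  five-dimensional filiform algebra by its second centre.\<close>

context vector_space begin

text \<open>The hypothesis \<open>dim V > 0\<close> excludes infinite-dimensional \<open>V\<close>, whose \<open>dim\<close> is \<open>0\<close>.\<close>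

lemma independent_finite_card_le_dim:
  assumes "B \<subseteq> V" "independent B" "dim V > 0"
  shows "finite B \<and> card B \<le> dim V"
proof -
  obtain A where A: "A \<subseteq> V" "independent A" "V \<subseteq> span A" "card A = dim V"
    using basis_exists by blast
  have "finite A" using A(4) assms(3) card_gt_0_iff by force
  moreover have "B \<subseteq> span A" using assms(1) A(3) by blast
  ultimately show ?thesis using independent_span_bound[of A B] assms(2) A(4) by auto
qed

lemma independent_card_eq_dim_spans:
  assumes "B \<subseteq> V" "independent B" "finite B" "card B = dim V" "dim V > 0"
  shows "V \<subseteq> span B"
proof
  fix w assume w: "w \<in> V"
  show "w \<in> span B"
  proof (rule ccontr)
    assume w_notin: "w \<notin> span B"
    then have "w \<notin> B" using span_base by blast
    have "independent (insert w B)" using independent_insertI[OF w_notin assms(2)] .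
    then have "card (insert w B) \<le> dim V"
      using independent_finite_card_le_dim[of "insert w B" V] assms w by auto
    then show False using assms(3,4) \<open>w \<notin> B\<close> by simp
  qed
qed

lemma dim_1_subset_span_singleton:
  assumes "z \<in> S" "z \<noteq> 0" "dim S = 1"
  shows "S \<subseteq> span {z}"
  using independent_card_eq_dim_spans[of "{z}" S] assms by simp

end

locale lie_alg =
  fixes scale :: "'k::field \<Rightarrow> 'v::ab_group_add \<Rightarrow> 'v" and V :: "'v set"
    and br :: "'v \<Rightarrow> 'v \<Rightarrow> 'v"
  assumes lie_algebra: "lie_algebra scale V br"
begin

sublocale vector_space scale using lie_algebra unfolding lie_algebra_def by auto

lemma subspace_V: "subspace V"
  using lie_algebra unfolding lie_algebra_def by auto
lemma bracket_in_V: "x \<in> V \<Longrightarrow> y \<in> V \<Longrightarrow> br x y \<in> V"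
  using lie_algebra unfolding lie_algebra_def by auto
lemma bracket_add_left: "x \<in> V \<Longrightarrow> y \<in> V \<Longrightarrow> z \<in> V \<Longrightarrow> br (x + y) z = br x z + br y z"
  using lie_algebra unfolding lie_algebra_def by auto
lemma bracket_add_right: "x \<in> V \<Longrightarrow> y \<in> V \<Longrightarrow> z \<in> V \<Longrightarrow> br x (y + z) = br x y + br x z"
  using lie_algebra unfolding lie_algebra_def by auto
lemma bracket_scale_left: "x \<in> V \<Longrightarrow> y \<in> V \<Longrightarrow> br (scale c x) y = scale c (br x y)"
  using lie_algebra unfolding lie_algebra_def by auto
lemma bracket_scale_right: "x \<in> V \<Longrightarrow> y \<in> V \<Longrightarrow> br x (scale c y) = scale c (br x y)"
  using lie_algebra unfolding lie_algebra_def by auto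
lemma bracket_self: "x \<in> V \<Longrightarrow> br x x = 0"
  using lie_algebra unfolding lie_algebra_def by auto
lemma jacobi: "x \<in> V \<Longrightarrow> y \<in> V \<Longrightarrow> z \<in> V \<Longrightarrow> br x (br y z) + br y (br z x) + br z (br x y) = 0"
  using lie_algebra unfolding lie_algebra_def by auto

lemma zero_in_V: "0 \<in> V" using subspace_V subspace_0 by auto
lemma add_in_V: "x \<in> V \<Longrightarrow> y \<in> V \<Longrightarrow> x + y \<in> V" using subspace_V subspace_add by auto
lemma scale_in_V: "x \<in> V \<Longrightarrow> scale c x \<in> V" using subspace_V subspace_scale by auto
lemma neg_in_V: "x \<in> V \<Longrightarrow> - x \<in> V" using subspace_V subspace_neg by auto
lemma diff_in_V: "x \<in> V \<Longrightarrow> y \<in> V \<Longrightarrow> x - y \<in> V" using subspace_V subspace_diff by auto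

lemma bracket_neg_left: "x \<in> V \<Longrightarrow> y \<in> V \<Longrightarrow> br (- x) y = - br x y"
  using bracket_scale_left[of x y "-1"] by simp
lemma bracket_diff_left: "x \<in> V \<Longrightarrow> y \<in> V \<Longrightarrow> z \<in> V \<Longrightarrow> br (x - y) z = br x z - br y z"
  using bracket_add_left[of x "-y" z] bracket_neg_left[of y z] neg_in_V by simp
lemma bracket_zero_left: "y \<in> V \<Longrightarrow> br 0 y = 0"
  using bracket_scale_left[of 0 y 0] zero_in_V by simp

lemma bracket_antisym: "x \<in> V \<Longrightarrow> y \<in> V \<Longrightarrow> br x y = - br y x"
proof -
  assume x: "x \<in> V" and y: "y \<in> V"
  have "0 = br (x + y) (x + y)" using bracket_self add_in_V x y by simp
  also have "\<dots> = br x x + br x y + (br y x + br y y)"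
    using bracket_add_left bracket_add_right x y add_in_V by (simp add: add.assoc)
  finally show ?thesis using bracket_self x y by (simp add: eq_neg_iff_add_eq_0)
qed

lemma jacobi_left:
  assumes p: "p \<in> V" and q: "q \<in> V" and w: "w \<in> V"
  shows "br (br p q) w + br (br q w) p + br (br w p) q = 0"
proof -
  have "br (br p q) w + br (br q w) p + br (br w p) q
      = - (br w (br p q) + br p (br q w) + br q (br w p))"
    using bracket_antisym[OF bracket_in_V[OF p q] w] bracket_antisym[OF bracket_in_V[OF q w] p]
      bracket_antisym[OF bracket_in_V[OF w p] q]
    by (simp add: algebra_simps)
  then show ?thesis using jacobi p q w by simp
qed

lemma jacobi_double_bracket:
  assumes "p \<in> V" "q \<in> V" "x \<in> V" "k \<in> V"
  shows "br (br (br p q) x) k + br (br (br q x) p) k + br (br (br x p) q) k = 0"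
proof -
  have "br (br (br p q) x) k + br (br (br q x) p) k + br (br (br x p) q) k
      = br (br (br p q) x + br (br q x) p + br (br x p) q) k"
    using assms bracket_add_left bracket_in_V add_in_V by simp
  also have "\<dots> = 0" using jacobi_left bracket_zero_left assms by simp
  finally show ?thesis .
qed

end

locale heisenberg_frame = lie_alg +
  fixes u v
  assumes u_in_V: "u \<in> V" and v_in_V: "v \<in> V" and bracket_uv_nonzero: "br u v \<noteq> 0"
    and derived_eq_span: "lie_derived scale V br = span {br u v}"
    and center_eq_span: "lie_center V br = span {br u v}"

lemma (in lie_alg) heisenberg_frame_exists:
  assumes "is_heisenberg scale V br m"
  obtains u v where "heisenberg_frame scale V br u v"
proof -
  define brackets where "brackets = {br x y |x y. x \<in> V \<and> y \<in> V}"
  have derived: "lie_derived scale V br = span brackets"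
    unfolding brackets_def lie_derived_def by simp
  have center: "lie_center V br = span brackets" and dim_brackets: "dim brackets = 1"
    using assms derived unfolding is_heisenberg_def by auto
  obtain u v where u: "u \<in> V" and v: "v \<in> V" and uv: "br u v \<noteq> 0"
  proof -
    have "brackets \<noteq> {} \<and> brackets \<noteq> {0}"
      using dim_brackets dim_le_card[of brackets "{}"] by (auto simp: span_empty)
    then obtain w where "w \<in> brackets" "w \<noteq> 0" by blast
    then show thesis using that unfolding brackets_def by blast
  qed
  have uv_in: "br u v \<in> brackets" using u v unfolding brackets_def by blast
  have "span brackets = span {br u v}"
  proof
    show "span brackets \<subseteq> span {br u v}"
      using dim_1_subset_span_singleton[OF uv_in uv dim_brackets] span_minimal subspace_span
      by blast
    show "span {br u v} \<subseteq> span brackets" using uv_in by (simp add: span_mono)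
  qed
  then have "heisenberg_frame scale V br u v"
    using u v uv derived center by unfold_locales simp_all
  then show thesis by (rule that)
qed

context heisenberg_frame begin

abbreviation z where "z \<equiv> br u v"

lemma z_in_V: "z \<in> V"
  using bracket_in_V u_in_V v_in_V .

lemma bracket_in_span_z: "p \<in> V \<Longrightarrow> q \<in> V \<Longrightarrow> br p q \<in> span {z}"
  using derived_eq_span unfolding lie_derived_def by (blast intro: span_base)

lemma bracket_eq_scale_z:
  assumes "p \<in> V" "q \<in> V"
  obtains t where "br p q = scale t z"
  using bracket_in_span_z[OF assms] span_singleton by auto

lemma z_central: "x \<in> V \<Longrightarrow> br z x = 0"
  using center_eq_span span_base[of z "{z}"] unfolding lie_center_def by auto

lemma bracket_z_right: "x \<in> V \<Longrightarrow> br x z = 0"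
  using bracket_antisym[OF _ z_in_V] z_central by simp

lemma center_in_span_z: "p \<in> V \<Longrightarrow> \<forall>x\<in>V. br p x = 0 \<Longrightarrow> p \<in> span {z}"
  using center_eq_span unfolding lie_center_def by auto

lemma v_notin_span_z: "v \<notin> span {z}"
proof
  assume "v \<in> span {z}"
  then obtain t where "v = scale t z" using span_singleton by auto
  then have "z = br u (scale t z)" by (rule arg_cong)
  also have "\<dots> = scale t (br u z)" using bracket_scale_right u_in_V z_in_V .
  also have "\<dots> = 0" using bracket_z_right u_in_V by simp
  finally show False using bracket_uv_nonzero by simp
qed

lemma u_notin_span_vz: "u \<notin> span {v, z}"
proof
  assume "u \<in> span {v, z}"
  then obtain k where "u - scale k v \<in> span {z}" using span_breakdown_eq by blast
  then obtain t where t: "u - scale k v = scale t z" using span_singleton by auto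
  have "z = br (u - scale k v) v"
    using bracket_diff_left bracket_scale_left bracket_self u_in_V v_in_V scale_in_V by simp
  also have "\<dots> = 0" using t bracket_scale_left z_in_V v_in_V z_central by simp
  finally show False using bracket_uv_nonzero by simp
qed

lemma independent_frame: "independent {u, v, z}"
  using u_notin_span_vz v_notin_span_z bracket_uv_nonzero
  by (auto simp: independent_insert span_empty intro: span_base)

lemma card_frame: "card {u, v, z} = 3"
proof -
  have "u \<noteq> v" "u \<noteq> z" "v \<noteq> z"
    using u_notin_span_vz v_notin_span_z by (auto intro: span_base)
  then show ?thesis by simp
qed

lemma dim_eq_3_iff_span_frame: "dim V = 3 \<longleftrightarrow> V \<subseteq> span {u, v, z}"
proof -
  have frame_in_V: "{u, v, z} \<subseteq> V" using u_in_V v_in_V z_in_V by simp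
  show ?thesis
    using independent_card_eq_dim_spans[OF frame_in_V independent_frame]
      basis_card_eq_dim[OF frame_in_V _ independent_frame] card_frame
    by auto
qed

lemma centralizer_decomposition:
  assumes w: "w \<in> V"
  obtains p s t where "p \<in> V" "br p u = 0" "br p v = 0" "w = p + scale s u + scale t v"
proof -
  obtain r where r: "br w u = scale r z" using bracket_eq_scale_z[OF w u_in_V] .
  obtain t where t: "br w v = scale t z" using bracket_eq_scale_z[OF w v_in_V] .
  define p where "p = w - scale t u + scale r v"
  have p: "p \<in> V" using p_def add_in_V diff_in_V scale_in_V w u_in_V v_in_V by simp
  have "br p u = br w u - scale t (br u u) + scale r (br v u)"
    using p_def bracket_add_left bracket_diff_left bracket_scale_left diff_in_V scale_in_V
      w u_in_V v_in_V by simp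
  also have "\<dots> = 0" using r bracket_self u_in_V bracket_antisym[OF v_in_V u_in_V] by simp
  finally have pu: "br p u = 0" .
  have "br p v = br w v - scale t (br u v) + scale r (br v v)"
    using p_def bracket_add_left bracket_diff_left bracket_scale_left diff_in_V scale_in_V
      w u_in_V v_in_V by simp
  also have "\<dots> = 0" using t bracket_self v_in_V by simp
  finally have pv: "br p v = 0" .
  have "w = p + scale t u + scale (- r) v" using p_def by (simp add: algebra_simps)
  then show thesis using that p pu pv by blast
qed

lemma span_frame_if_centralizer_abelian:
  assumes abelian: "\<And>a b. a \<in> V \<Longrightarrow> b \<in> V \<Longrightarrow> br a u = 0 \<Longrightarrow> br a v = 0 \<Longrightarrow>
      br b u = 0 \<Longrightarrow> br b v = 0 \<Longrightarrow> br a b = 0"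
  shows "V \<subseteq> span {u, v, z}"
proof
  fix w assume w: "w \<in> V"
  obtain p s t where p: "p \<in> V" "br p u = 0" "br p v = 0"
    and w_eq: "w = p + scale s u + scale t v"
    using centralizer_decomposition[OF w] .
  have "br p x = 0" if x: "x \<in> V" for x
  proof -
    obtain q s' t' where q: "q \<in> V" "br q u = 0" "br q v = 0"
      and x_eq: "x = q + scale s' u + scale t' v"
      using centralizer_decomposition[OF x] .
    have "br p x = br p q + scale s' (br p u) + scale t' (br p v)"
      unfolding x_eq using bracket_add_right bracket_scale_right p q u_in_V v_in_V
        scale_in_V add_in_V by simp
    then show ?thesis using abelian[OF p(1) q(1) p(2,3) q(2,3)] p by simp
  qed
  then have "p \<in> span {u, v, z}"
    using center_in_span_z[OF p(1)] span_mono[of "{z}" "{u, v, z}"] by blast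
  then show "w \<in> span {u, v, z}"
    unfolding w_eq by (intro span_add span_scale) (auto intro: span_base)
qed

end

locale lie_surj_center2 = H: lie_alg s1 H brH + L: lie_alg s2 V br
  for s1 :: "'k::field \<Rightarrow> 'w::ab_group_add \<Rightarrow> 'w" and H brH
    and s2 :: "'k \<Rightarrow> 'v::ab_group_add \<Rightarrow> 'v" and V br +
  fixes f :: "'w \<Rightarrow> 'v"
  assumes hom: "lie_hom s1 H brH s2 V br f" and surj: "f ` H = V"
    and kernel_eq_center2: "{x \<in> H. f x = 0} = lie_center2 H brH"
begin

lemma f_in_V: "x \<in> H \<Longrightarrow> f x \<in> V"
  using hom unfolding lie_hom_def by auto
lemma f_add: "x \<in> H \<Longrightarrow> y \<in> H \<Longrightarrow> f (x + y) = f x + f y"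
  using hom unfolding lie_hom_def by auto
lemma f_scale: "x \<in> H \<Longrightarrow> f (s1 c x) = s2 c (f x)"
  using hom unfolding lie_hom_def by auto
lemma f_bracket: "x \<in> H \<Longrightarrow> y \<in> H \<Longrightarrow> f (brH x y) = br (f x) (f y)"
  using hom unfolding lie_hom_def by auto
lemma f_diff: "x \<in> H \<Longrightarrow> y \<in> H \<Longrightarrow> f (x - y) = f x - f y"
  using f_add[of "x - y" y] H.diff_in_V by (simp add: eq_diff_eq)

lemma kernel_double_bracket:
  assumes "p \<in> H" "f p = 0" "w \<in> H" "k \<in> H"
  shows "brH (brH p w) k = 0"
proof -
  have "p \<in> lie_center2 H brH" using assms(1,2) kernel_eq_center2 by blast
  then show ?thesis using assms(3,4) unfolding lie_center2_def lie_center_def by blast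
qed

lemma double_bracket_congr:
  assumes y: "y \<in> H" and c: "c \<in> H" and x: "x \<in> H" and k: "k \<in> H"
    and fy: "f y = s2 \<mu> (f c)"
  shows "brH (brH y x) k = s1 \<mu> (brH (brH c x) k)"
proof -
  have \<mu>c: "s1 \<mu> c \<in> H" using H.scale_in_V c .
  have "f (y - s1 \<mu> c) = 0" using f_diff[OF y \<mu>c] f_scale[OF c] fy by simp
  then have "brH (brH (y - s1 \<mu> c) x) k = 0"
    using kernel_double_bracket H.diff_in_V[OF y \<mu>c] x k by blast
  moreover have "brH (brH (y - s1 \<mu> c) x) k = brH (brH y x) k - s1 \<mu> (brH (brH c x) k)"
    using H.bracket_diff_left[OF H.bracket_in_V[OF y x] H.bracket_in_V[OF \<mu>c x] k]
      H.bracket_diff_left[OF y \<mu>c x] H.bracket_scale_left[OF c x]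
      H.bracket_scale_left[OF H.bracket_in_V[OF c x] k]
    by simp
  ultimately show ?thesis by simp
qed

lemma jacobi_mod_center2:
  assumes c: "c \<in> H" and k: "k \<in> H" and p: "p \<in> H" and q: "q \<in> H" and x: "x \<in> H"
    and "f (brH p q) = s2 \<mu>\<^sub>1 (f c)" "f (brH q x) = s2 \<mu>\<^sub>2 (f c)" "f (brH x p) = s2 \<mu>\<^sub>3 (f c)"
  shows "s1 \<mu>\<^sub>1 (brH (brH c x) k) + s1 \<mu>\<^sub>2 (brH (brH c p) k) + s1 \<mu>\<^sub>3 (brH (brH c q) k) = 0"
proof -
  have "brH (brH (brH p q) x) k = s1 \<mu>\<^sub>1 (brH (brH c x) k)"
    "brH (brH (brH q x) p) k = s1 \<mu>\<^sub>2 (brH (brH c p) k)"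
    "brH (brH (brH x p) q) k = s1 \<mu>\<^sub>3 (brH (brH c q) k)"
    using double_bracket_congr[OF H.bracket_in_V[OF p q] c x k]
      double_bracket_congr[OF H.bracket_in_V[OF q x] c p k]
      double_bracket_congr[OF H.bracket_in_V[OF x p] c q k] assms(6-8)
    by simp_all
  then show ?thesis using H.jacobi_double_bracket[OF p q x k] by simp
qed

lemma centralizer_abelian:
  assumes u: "u \<in> V" and v: "v \<in> V" and uv: "br u v \<noteq> 0"
    and brackets: "\<And>p q. p \<in> V \<Longrightarrow> q \<in> V \<Longrightarrow> br p q \<in> L.span {br u v}"
    and a: "a \<in> V" and b: "b \<in> V"
    and au: "br a u = 0" and av: "br a v = 0" and bu: "br b u = 0" and bv: "br b v = 0"
  shows "br a b = 0"
proof (rule ccontr)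
  assume ab: "br a b \<noteq> 0"
  have "\<exists>x\<in>H. f x = y" if "y \<in> V" for y using surj that by blast
  then obtain u' v' a' b' where u': "u' \<in> H" "f u' = u" and v': "v' \<in> H" "f v' = v"
    and a': "a' \<in> H" "f a' = a" and b': "b' \<in> H" "f b' = b"
    using u v a b by meson
  define c where "c = brH u' v'"
  have c: "c \<in> H" and fc: "f c = br u v"
    using c_def H.bracket_in_V f_bracket u' v' by auto
  have coefficient: "\<exists>\<mu>. f (brH p q) = s2 \<mu> (f c)" if "p \<in> H" "q \<in> H" for p q
  proof -
    have "br (f p) (f q) \<in> L.span {br u v}" using brackets f_in_V that by blast
    then show ?thesis unfolding L.span_singleton fc f_bracket[OF that] by blast
  qed
  obtain \<kappa> where \<kappa>: "f (brH a' b') = s2 \<kappa> (f c)" using coefficient a' b' by blast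
  have \<kappa>_nonzero: "\<kappa> \<noteq> 0" using \<kappa> ab f_bracket a' b' by auto
  have "c \<in> lie_center2 H brH"
    unfolding lie_center2_def lie_center_def
  proof (intro CollectI conjI ballI c)
    fix w assume w: "w \<in> H"
    show "brH c w \<in> H" using H.bracket_in_V c w .
    fix k assume k: "k \<in> H"
    have "f (brH b' u') = s2 0 (f c)" "f (brH u' a') = s2 0 (f c)"
      using f_bracket a' b' u' bu au L.bracket_antisym[OF u a] by simp_all
    from jacobi_mod_center2[OF c k a'(1) b'(1) u'(1) \<kappa> this]
    have "s1 \<kappa> (brH (brH c u') k) = 0" by simp
    then have cu': "brH (brH c u') k = 0" using \<kappa>_nonzero by simp
    have "f (brH b' v') = s2 0 (f c)" "f (brH v' a') = s2 0 (f c)"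
      using f_bracket a' b' v' bv av L.bracket_antisym[OF v a] by simp_all
    from jacobi_mod_center2[OF c k a'(1) b'(1) v'(1) \<kappa> this]
    have "s1 \<kappa> (brH (brH c v') k) = 0" by simp
    then have cv': "brH (brH c v') k = 0" using \<kappa>_nonzero by simp
    have "f (brH u' v') = s2 1 (f c)" using c_def by simp
    moreover obtain \<mu>\<^sub>2 \<mu>\<^sub>3 where "f (brH v' w) = s2 \<mu>\<^sub>2 (f c)" "f (brH w u') = s2 \<mu>\<^sub>3 (f c)"
      using coefficient v' u' w by blast
    ultimately have
      "s1 1 (brH (brH c w) k) + s1 \<mu>\<^sub>2 (brH (brH c u') k) + s1 \<mu>\<^sub>3 (brH (brH c v') k) = 0"
      using jacobi_mod_center2[OF c k u'(1) v'(1) w] by blast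
    then show "brH (brH c w) k = 0" using cu' cv' by simp
  qed
  then have "f c = 0" using kernel_eq_center2 by blast
  then show False using fc uv by simp
qed

end

text \<open>The witness for \<open>m = 1\<close>: the five-dimensional filiform algebra with basis \<open>e\<^sub>0, \<dots>, e\<^sub>4\<close>
  (the coordinates \<open>Inr 0, \<dots>, Inr 4\<close>) and \<open>[e\<^sub>0,e\<^sub>1] = e\<^sub>2\<close>, \<open>[e\<^sub>0,e\<^sub>2] = e\<^sub>3\<close>, \<open>[e\<^sub>0,e\<^sub>3] = e\<^sub>4\<close>.\<close>

definition filiform5 :: "('h + nat \<Rightarrow> 'k::field) set" where
  "filiform5 = {g. (\<forall>x. g (Inl x) = 0) \<and> (\<forall>n\<ge>5. g (Inr n) = 0)}"

definition filiform5_bracket ::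
    "('h + nat \<Rightarrow> 'k::field) \<Rightarrow> ('h + nat \<Rightarrow> 'k) \<Rightarrow> ('h + nat \<Rightarrow> 'k)" where
  "filiform5_bracket a b = (\<lambda>i.
     if i = Inr 2 then a (Inr 0) * b (Inr 1) - a (Inr 1) * b (Inr 0)
     else if i = Inr 3 then a (Inr 0) * b (Inr 2) - a (Inr 2) * b (Inr 0)
     else if i = Inr 4 then a (Inr 0) * b (Inr 3) - a (Inr 3) * b (Inr 0) else 0)"

definition unit_vector :: "nat \<Rightarrow> ('h + nat \<Rightarrow> 'k::field)" where
  "unit_vector j = (\<lambda>i. if i = Inr j then 1 else 0)"

lemma unit_vector_in_filiform5: "j < 5 \<Longrightarrow> unit_vector j \<in> filiform5"
  by (auto simp: unit_vector_def filiform5_def)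

lemma vector_space_fscale: "vector_space (fscale :: 'k::field \<Rightarrow> ('i \<Rightarrow> 'k) \<Rightarrow> _)"
  unfolding vector_space_def fscale_def by (auto simp: fun_eq_iff algebra_simps)

lemma lie_algebra_filiform5:
  "lie_algebra fscale (filiform5 :: ('h + nat \<Rightarrow> 'k::field) set) filiform5_bracket"
  unfolding lie_algebra_def
proof (intro conjI ballI allI)
  show "vector_space (fscale :: 'k \<Rightarrow> ('h + nat \<Rightarrow> 'k) \<Rightarrow> _)" by (rule vector_space_fscale)
  show "module.subspace fscale (filiform5 :: ('h + nat \<Rightarrow> 'k) set)"
    unfolding module.subspace_def[OF vector_space_fscale[unfolded module_iff_vector_space[symmetric]]]
    by (auto simp: filiform5_def fscale_def)
  fix x y z :: "'h + nat \<Rightarrow> 'k" and c :: 'k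
  show "filiform5_bracket x y \<in> filiform5"
    by (auto simp: filiform5_def filiform5_bracket_def)
  show "filiform5_bracket x x = 0"
    "filiform5_bracket (fscale c x) y = fscale c (filiform5_bracket x y)"
    "filiform5_bracket x (fscale c y) = fscale c (filiform5_bracket x y)"
    "filiform5_bracket (x + y) z = filiform5_bracket x z + filiform5_bracket y z"
    "filiform5_bracket x (y + z) = filiform5_bracket x y + filiform5_bracket x z"
    "filiform5_bracket x (filiform5_bracket y z) + filiform5_bracket y (filiform5_bracket z x)
      + filiform5_bracket z (filiform5_bracket x y) = 0"
    by (auto simp: filiform5_bracket_def fscale_def fun_eq_iff algebra_simps)
qed

lemma lie_center2_filiform5:
  "lie_center2 (filiform5 :: ('h + nat \<Rightarrow> 'k::field) set) filiform5_bracket =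
   {x \<in> filiform5. x (Inr 0) = 0 \<and> x (Inr 1) = 0 \<and> x (Inr 2) = 0}"
proof (intro set_eqI iffI)
  fix x :: "'h + nat \<Rightarrow> 'k" assume x: "x \<in> lie_center2 filiform5 filiform5_bracket"
  then have "x \<in> filiform5" and x_center2: "\<And>y w. y \<in> filiform5 \<Longrightarrow> w \<in> filiform5 \<Longrightarrow>
      filiform5_bracket (filiform5_bracket x y) w = 0"
    unfolding lie_center2_def lie_center_def by auto
  moreover have e0: "(unit_vector 0 :: 'h + nat \<Rightarrow> 'k) \<in> filiform5"
    and e1: "(unit_vector 1 :: 'h + nat \<Rightarrow> 'k) \<in> filiform5"
    by (rule unit_vector_in_filiform5, simp)+
  then have "filiform5_bracket (filiform5_bracket x (unit_vector 0)) (unit_vector 0) (Inr 3) = 0"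
    "filiform5_bracket (filiform5_bracket x (unit_vector 0)) (unit_vector 0) (Inr 4) = 0"
    "filiform5_bracket (filiform5_bracket x (unit_vector 1)) (unit_vector 0) (Inr 3) = 0"
    using x_center2[OF e0 e0] x_center2[OF e1 e0] by simp_all
  ultimately show "x \<in> {x \<in> filiform5. x (Inr 0) = 0 \<and> x (Inr 1) = 0 \<and> x (Inr 2) = 0}"
    by (simp add: filiform5_bracket_def unit_vector_def)
next
  fix x :: "'h + nat \<Rightarrow> 'k"
  assume "x \<in> {x \<in> filiform5. x (Inr 0) = 0 \<and> x (Inr 1) = 0 \<and> x (Inr 2) = 0}"
  then have "x \<in> filiform5" and "x (Inr 0) = 0" "x (Inr 1) = 0" "x (Inr 2) = 0" by auto
  moreover have "filiform5_bracket x y \<in> filiform5" for y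
    by (auto simp: filiform5_def filiform5_bracket_def)
  ultimately show "x \<in> lie_center2 filiform5 filiform5_bracket"
    unfolding lie_center2_def lie_center_def by (auto simp: filiform5_bracket_def fun_eq_iff)
qed

context heisenberg_frame begin

lemma bracket_frame_coordinates:
  "br (scale A u + scale B v + scale C z) (scale A' u + scale B' v + scale C' z)
    = scale (A * B' - B * A') z"
proof -
  define y where "y = scale A' u + scale B' v + scale C' z"
  have y: "y \<in> V" using y_def add_in_V scale_in_V u_in_V v_in_V z_in_V by simp
  have "br u y = scale B' z" "br v y = - scale A' z"
    using y_def bracket_add_right bracket_scale_right add_in_V scale_in_V u_in_V v_in_V z_in_V
      bracket_self bracket_z_right bracket_antisym[OF v_in_V u_in_V] by simp_all
  moreover have "br (scale A u + scale B v + scale C z) y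
      = scale A (br u y) + scale B (br v y) + scale C (br z y)"
    using bracket_add_left bracket_scale_left add_in_V scale_in_V u_in_V v_in_V z_in_V y by simp
  ultimately show ?thesis using z_central[OF y] y_def by (simp add: algebra_simps)
qed

definition frame_map where
  "frame_map (g :: 'h + nat \<Rightarrow> _) = scale (g (Inr 0)) u + scale (g (Inr 1)) v + scale (g (Inr 2)) z"

lemma frame_map_in_V: "frame_map g \<in> V"
  unfolding frame_map_def by (intro add_in_V scale_in_V u_in_V v_in_V z_in_V)

lemma bracket_frame_map:
  "br (frame_map a) (frame_map b) = scale (a (Inr 0) * b (Inr 1) - a (Inr 1) * b (Inr 0)) z"
  unfolding frame_map_def by (rule bracket_frame_coordinates)

lemma lie_hom_frame_map: "lie_hom fscale filiform5 filiform5_bracket scale V br frame_map"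
  unfolding lie_hom_def
proof (intro conjI ballI allI)
  fix x y :: "'h + nat \<Rightarrow> _" and c
  show "frame_map x \<in> V" by (rule frame_map_in_V)
  show "frame_map (x + y) = frame_map x + frame_map y"
    by (simp add: frame_map_def algebra_simps)
  show "frame_map (fscale c x) = scale c (frame_map x)"
    by (simp add: frame_map_def fscale_def algebra_simps)
  show "frame_map (filiform5_bracket x y) = br (frame_map x) (frame_map y)"
    unfolding bracket_frame_map by (simp add: frame_map_def filiform5_bracket_def)
qed

lemma frame_map_eq_0_iff:
  "frame_map g = 0 \<longleftrightarrow> g (Inr 0) = 0 \<and> g (Inr 1) = 0 \<and> g (Inr 2) = 0"
proof
  assume g: "frame_map g = 0"
  have "scale (g (Inr 0) * e (Inr 1) - g (Inr 1) * e (Inr 0)) z = 0"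
    for e :: "_ + nat \<Rightarrow> _"
    using bracket_frame_map[of g e] g bracket_zero_left[OF frame_map_in_V[of e]] by simp
  from this[of "unit_vector 1"] this[of "unit_vector 0"] have "g (Inr 0) = 0" "g (Inr 1) = 0"
    using bracket_uv_nonzero by (simp_all add: unit_vector_def)
  moreover from this have "scale (g (Inr 2)) z = 0" using g by (simp add: frame_map_def)
  ultimately show "g (Inr 0) = 0 \<and> g (Inr 1) = 0 \<and> g (Inr 2) = 0"
    using bracket_uv_nonzero by simp
qed (simp add: frame_map_def)

lemma frame_map_image:
  assumes spans: "V \<subseteq> span {u, v, z}"
  shows "frame_map ` (filiform5 :: ('h + nat \<Rightarrow> _) set) = V"
proof
  show "frame_map ` (filiform5 :: ('h + nat \<Rightarrow> _) set) \<subseteq> V" using frame_map_in_V by auto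
  show "V \<subseteq> frame_map ` (filiform5 :: ('h + nat \<Rightarrow> _) set)"
  proof
    fix w assume "w \<in> V"
    then have "w \<in> span {u, v, z}" using spans by auto
    then obtain A B C where "w - scale A u - scale B v = scale C z"
      by (auto simp: span_breakdown_eq span_singleton)
    then have w: "w = scale A u + scale B v + scale C z" by (simp add: algebra_simps)
    define g :: "'h + nat \<Rightarrow> _" where
      "g = (\<lambda>i. if i = Inr 0 then A else if i = Inr 1 then B else if i = Inr 2 then C else 0)"
    have "g \<in> filiform5" by (auto simp: g_def filiform5_def)
    moreover have "frame_map g = w" using w by (simp add: g_def frame_map_def)
    ultimately show "w \<in> frame_map ` (filiform5 :: ('h + nat \<Rightarrow> _) set)" by blast
  qed
qed

lemma two_capable_iff_span_frame: "two_capable TYPE('h) scale V br \<longleftrightarrow> V \<subseteq> span {u, v, z}"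
proof
  assume "two_capable TYPE('h) scale V br"
  then obtain H :: "('h + nat \<Rightarrow> _) set" and brH f where
    "lie_algebra fscale H brH" "lie_hom fscale H brH scale V br f" "f ` H = V"
    "{x \<in> H. f x = 0} = lie_center2 H brH"
    unfolding two_capable_def by blast
  then interpret Q: lie_surj_center2 fscale H brH scale V br f
    using lie_algebra by unfold_locales simp_all
  show "V \<subseteq> span {u, v, z}"
    using span_frame_if_centralizer_abelian
      Q.centralizer_abelian[OF u_in_V v_in_V bracket_uv_nonzero bracket_in_span_z]
    by blast
next
  assume "V \<subseteq> span {u, v, z}"
  moreover have "{x \<in> filiform5. frame_map x = 0}
      = lie_center2 (filiform5 :: ('h + nat \<Rightarrow> _) set) filiform5_bracket"
    using lie_center2_filiform5 frame_map_eq_0_iff by auto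
  ultimately show "two_capable TYPE('h) scale V br"
    unfolding two_capable_def
    using lie_algebra_filiform5 lie_hom_frame_map frame_map_image by blast
qed

end

theorem theorem3p3:
  fixes scale :: "'k::field \<Rightarrow> 'v::ab_group_add \<Rightarrow> 'v"
    and V :: "'v set" and br :: "'v \<Rightarrow> 'v \<Rightarrow> 'v" and m :: nat
  assumes "is_heisenberg scale V br m"
  shows "two_capable TYPE('h) scale V br \<longleftrightarrow> m = 1"
proof -
  interpret lie_alg scale V br
    using assms unfolding is_heisenberg_def by unfold_locales simp
  obtain u v where "heisenberg_frame scale V br u v"
    using heisenberg_frame_exists[OF assms] .
  then interpret heisenberg_frame scale V br u v .
  have "dim V = 2 * m + 1" using assms unfolding is_heisenberg_def by simp
  then show ?thesis using two_capable_iff_span_frame dim_eq_3_iff_span_frame by auto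
qed

end
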